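(* Let $u$ be the field with $u(x+\tfrac12,t+\tfrac12)=(-1)^{(x-1)(t-1)}$ for all $(x,t)\in\mathbb{Z}^2$. For each $(x,t)\in\mathbb{Z}^2$ with $t\ge 1$ and either $(x,t)\equiv(2,1)\pmod 4$ or $(x,t)\equiv(0,3)\pmod 4$ (componentwise), the following hold: 1. $\sqrt2\, a_1(x+1,t,u)=a_1(x,t-1,u)=\sqrt2\, a_1(x-1,t,u)=a_1(x,t+1,u)=\sqrt2\, a_2(x+1,t,u)=\sqrt2\, a_2(x-1,t,u)-2a_2(x,t+1,u)$; 2. $a_2(x,t-1,u)=0$.
   Context: A checker path is a finite sequence of integer points $s_0,s_1,\dots,s_t$ in the plane such that each vector $s_{k+1}-s_k$ equals $(1,1)$ or $(-1,1)$. A turn is a point $s_k$ with $0<k<t$ such that the vectors $s_{k+1}-s_k$ and $s_{k-1}-s_k$ are orthogonal; $\mathrm{turns}(s)$ is the number of turns. An edge is a segment joining two diagonally adjacent integer points (differing by $(\pm1,1)$) whose coordinate sums are even; every step $s_ks_{k+1}$ of a checker path starting at $(0,0)$ is an edge. A field is a map $u$ from edges to $\{-1,1\}$; for half-integers $x,t$ (i.e. $x-\tfrac12,t-\tfrac12\in\mathbb{Z}$), $u(x,t)$ denotes the value of $u$ on the edge with midpoint $(x,t)$. For integers $x$ and $t\ge 0$ define $$a(x,t,u):=2^{(1-t)/2}\, i\sum_s(-i)^{\mathrm{turns}(s)}u(s_0s_1)u(s_1s_2)\cdots u(s_{t-1}s_t),$$ the sum over all checker paths $s=(s_0,\dots,s_t)$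 with $s_0=(0,0)$, $s_1=(1,1)$, $s_t=(x,t)$ (an empty sum is $0$; in particular $a(x,0,u)=0$). Let $a_1(x,t,u)$ and $a_2(x,t,u)$ be the real and imaginary parts of $a(x,t,u)$. *)

theory Defs
  imports Complex_Main
begin

type_synonym point = "int \<times> int"
type_synonym edge = "point \<times> point"
(* a field: value on each edge (only values on edges matter); should be in {-1,1} *)
type_synonym field = "edge \<Rightarrow> int"

definition is_field :: "field \<Rightarrow> bool" where
  "is_field u \<longleftrightarrow> (\<forall>e. u e \<in> {-1, 1})"

definition vsub :: "point \<Rightarrow> point \<Rightarrow> point" where
  "vsub p q = (fst p - fst q, snd p - snd q)"

definition checker_path :: "point list \<Rightarrow> bool" where
  "checker_path s \<longleftrightarrow> s \<noteq> [] \<and>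
     (\<forall>k. k + 1 < length s \<longrightarrow> vsub (s ! (k+1)) (s ! k) \<in> {(1,1), (-1,1)})"

definition dotp :: "point \<Rightarrow> point \<Rightarrow> int" where
  "dotp p q = fst p * fst q + snd p * snd q"

definition turns :: "point list \<Rightarrow> nat" where
  "turns s = card {k. 0 < k \<and> k + 1 < length s \<and>
       dotp (vsub (s ! (k+1)) (s ! k)) (vsub (s ! (k-1)) (s ! k)) = 0}"

definition paths :: "int \<Rightarrow> int \<Rightarrow> point list set" where
  "paths x t = {s. t \<ge> 1 \<and> length s = nat t + 1 \<and> checker_path s \<and>
      s ! 0 = (0,0) \<and> s ! 1 = (1,1) \<and> s ! nat t = (x,t)}"

definition amp :: "int \<Rightarrow> int \<Rightarrow> field \<Rightarrow> complex" where
  "amp x t u = complex_of_real (2 powr ((1 - real_of_int t) / 2)) * \<i> *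
     (\<Sum>s\<in>paths x t. (- \<i>) ^ turns s *
        (\<Prod>k<nat t. of_int (u (s ! k, s ! (k+1)))))"

definition a1 :: "int \<Rightarrow> int \<Rightarrow> field \<Rightarrow> real" where
  "a1 x t u = Re (amp x t u)"

definition a2 :: "int \<Rightarrow> int \<Rightarrow> field \<Rightarrow> real" where
  "a2 x t u = Im (amp x t u)"

(* value of the field on the edge e = (p,q): the midpoint of e is
   (min(p_x,q_x)+1/2, min(p_t,q_t)+1/2); the field of the theorem has
   u(x+1/2,t+1/2) = (-1)^((x-1)(t-1)) *)
definition u_thm :: field where
  "u_thm e = (let x = min (fst (fst e)) (fst (snd e));
                  t = min (snd (fst e)) (snd (snd e))
              in if even ((x - 1) * (t - 1)) then 1 else -1)"

end

theory Submission
  imports Defs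
begin

(* Split the paths to (x, t) by the direction of their last step.  For an arbitrary field u
   the two partial sums obey the Dirac recursion: appending a step multiplies by the value of
   u on it, and by -i exactly when the step turns.  Hence a(x,t,u) = 2^((1-t)/2) (a1' + i a2')
   with integers a1', a2' given by an explicit recursion in t.  For the field of the theorem,
   two steps of that recursion preserve "a2'(x,t) = 0 and a1'(x,t) = a1'(x+2,t) + a2'(x+2,t)
   whenever t is even and x = t + 2 mod 4", and one further step yields all the identities at
   the odd time t. *)

lemma checker_path_coords:
  assumes "checker_path s" "s ! 0 = (0,0)" "k < length s"
  shows "\<bar>fst (s ! k)\<bar> \<le> int k \<and> snd (s ! k) = int k"
  using assms(3)
proof (induction k)
  case 0
  then show ?case using assms(2) by simp
next
  case (Suc k)
  have "vsub (s ! (k+1)) (s ! k) \<in> {(1,1), (-1,1)}"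
    using assms(1) Suc.prems unfolding checker_path_def by auto
  then show ?case using Suc by (auto simp: vsub_def prod_eq_iff)
qed

lemma finite_paths: "finite (paths x t)"
proof -
  let ?N = "int (nat t)"
  have "paths x t \<subseteq> {s. set s \<subseteq> {-?N..?N} \<times> {0..?N} \<and> length s = nat t + 1}"
  proof (rule subsetI, rule CollectI, rule conjI)
    fix s
    assume s: "s \<in> paths x t"
    show "set s \<subseteq> {-?N..?N} \<times> {0..?N}"
    proof
      fix p
      assume "p \<in> set s"
      then obtain k where k: "k < length s" "p = s ! k"
        by (auto simp: in_set_conv_nth)
      with s show "p \<in> {-?N..?N} \<times> {0..?N}"
        using checker_path_coords[of s k] unfolding paths_def by (auto simp: mem_Times_iff)
    qed
    show "length s = nat t + 1" using s by (simp add: paths_def)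
  qed
  moreover have "finite {s. set s \<subseteq> {-?N..?N} \<times> {0..?N} \<and> length s = nat t + 1}"
    by (rule finite_lists_length_eq) auto
  ultimately show ?thesis by (rule finite_subset)
qed

lemma turns_snoc:
  assumes "length s = n + 1" "n \<ge> 1"
  shows "turns (s @ [v]) = turns s +
     (if dotp (vsub v (s ! n)) (vsub (s ! (n-1)) (s ! n)) = 0 then 1 else 0)"
proof -
  define T where "T s = {k. 0 < k \<and> k + 1 < length s \<and>
       dotp (vsub (s ! (k+1)) (s ! k)) (vsub (s ! (k-1)) (s ! k)) = 0}" for s :: "point list"
  have "T (s @ [v])
      = T s \<union> (if dotp (vsub v (s ! n)) (vsub (s ! (n-1)) (s ! n)) = 0 then {n} else {})"
    using assms by (auto simp: T_def nth_append less_Suc_eq)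
  moreover have "finite (T s)" "n \<notin> T s"
    using assms by (auto simp: T_def)
  ultimately show ?thesis unfolding turns_def T_def[symmetric] by auto
qed

definition last_step :: "nat \<Rightarrow> point list \<Rightarrow> int" where
  "last_step n s = fst (s ! n) - fst (s ! (n - 1))"

lemma in_paths_iff:
  "s \<in> paths x (int n) \<longleftrightarrow>
    n \<ge> 1 \<and> length s = n + 1 \<and> checker_path s \<and> s ! 0 = (0,0) \<and> s ! 1 = (1,1) \<and> s ! n = (x, int n)"
  by (simp add: paths_def)

lemma paths_penultimate:
  assumes "s \<in> paths x (int n)"
  shows "last_step n s \<in> {1, -1} \<and> s ! (n - 1) = (x - last_step n s, int n - 1)"
proof -
  have "n \<ge> 1" "s ! n = (x, int n)" "checker_path s" "length s = n + 1"
    using assms by (simp_all add: in_paths_iff)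
  then have "vsub (s ! (n - 1 + 1)) (s ! (n - 1)) \<in> {(1,1), (-1,1)}"
    unfolding checker_path_def by (metis add.commute le_add_diff_inverse less_add_one)
  then have "vsub (s ! n) (s ! (n - 1)) \<in> {(1,1), (-1,1)}"
    using \<open>n \<ge> 1\<close> by simp
  then show ?thesis
    using \<open>n \<ge> 1\<close> \<open>s ! n = (x, int n)\<close>
    by (auto simp: last_step_def vsub_def prod_eq_iff)
qed

lemma snoc_in_paths:
  assumes "r \<in> paths y (int n)" "d \<in> {1, -1}"
  shows "r @ [(y + d, int n + 1)] \<in> paths (y + d) (int (Suc n))"
proof -
  have r: "n \<ge> 1" "length r = n + 1" "checker_path r" "r ! 0 = (0,0)" "r ! 1 = (1,1)"
    "r ! n = (y, int n)"
    using assms(1) by (simp_all add: in_paths_iff)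
  have "checker_path (r @ [(y + d, int n + 1)])"
    unfolding checker_path_def
  proof (intro conjI allI impI)
    fix k
    assume "k + 1 < length (r @ [(y + d, int n + 1)])"
    then consider "k + 1 < length r" | "k = n"
      using r(2) by fastforce
    then show "vsub ((r @ [(y + d, int n + 1)]) ! (k+1)) ((r @ [(y + d, int n + 1)]) ! k)
        \<in> {(1,1), (-1,1)}"
      by cases (use r assms(2) in \<open>auto simp: nth_append vsub_def checker_path_def\<close>)
  qed simp
  with r show ?thesis unfolding in_paths_iff by (simp add: nth_append)
qed

lemma butlast_in_paths:
  assumes "s \<in> paths x (int (Suc n))" "n \<ge> 1"
  shows "butlast s \<in> paths (x - last_step (Suc n) s) (int n)
    \<and> s = butlast s @ [(x, int n + 1)]"
proof -
  have s: "length s = n + 2" "checker_path s" "s ! 0 = (0,0)" "s ! 1 = (1,1)"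
    "s ! Suc n = (x, int n + 1)"
    using assms(1) unfolding in_paths_iff by simp_all
  then have snoc: "s = butlast s @ [(x, int n + 1)]"
    by (metis append_butlast_last_id last_conv_nth list.size(3) add_2_eq_Suc' diff_Suc_1
        nat.distinct(1))
  have nth: "butlast s ! k = s ! k" if "k \<le> n" for k
    using that s(1) by (simp add: nth_butlast)
  have "length (butlast s) = n + 1"
    using s(1) by simp
  then have "checker_path (butlast s)"
    using s nth unfolding checker_path_def by (auto simp del: length_butlast)
  moreover have "s ! n = (x - last_step (Suc n) s, int n)"
    using paths_penultimate[OF assms(1)] by simp
  ultimately show ?thesis
    using s assms(2) nth[of 0] nth[of 1] nth[of n] snoc unfolding in_paths_iff by simp
qed

lemma paths_Suc_by_last_step:
  assumes "n \<ge> 1" "d \<in> {1, -1}"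
  shows "{s \<in> paths x (int (Suc n)). last_step (Suc n) s = d}
       = (\<lambda>r. r @ [(x, int n + 1)]) ` paths (x - d) (int n)"
proof (intro set_eqI iffI)
  fix s
  assume "s \<in> {s \<in> paths x (int (Suc n)). last_step (Suc n) s = d}"
  then show "s \<in> (\<lambda>r. r @ [(x, int n + 1)]) ` paths (x - d) (int n)"
    using butlast_in_paths[of s x n] assms(1)
    by (metis (mono_tags, lifting) image_eqI mem_Collect_eq)
next
  fix s
  assume "s \<in> (\<lambda>r. r @ [(x, int n + 1)]) ` paths (x - d) (int n)"
  then obtain r where r: "r \<in> paths (x - d) (int n)" "s = r @ [(x, int n + 1)]"
    by blast
  then have "s \<in> paths x (int (Suc n))"
    using snoc_in_paths[OF r(1) assms(2)] by simp
  moreover have "last_step (Suc n) s = d"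
    using r by (simp add: in_paths_iff last_step_def nth_append)
  ultimately show "s \<in> {s \<in> paths x (int (Suc n)). last_step (Suc n) s = d}"
    by blast
qed

definition weight :: "field \<Rightarrow> nat \<Rightarrow> point list \<Rightarrow> complex" where
  "weight u n s = (- \<i>) ^ turns s * (\<Prod>k<n. of_int (u (s ! k, s ! (k+1))))"

lemma weight_snoc:
  assumes "r \<in> paths y (int n)" "d \<in> {1, -1}"
  shows "weight u (Suc n) (r @ [(y + d, int n + 1)])
       = weight u n r * (if last_step n r = d then 1 else - \<i>)
         * of_int (u ((y, int n), (y + d, int n + 1)))"
proof -
  have r: "n \<ge> 1" "length r = n + 1" "r ! n = (y, int n)"
    using assms(1) unfolding in_paths_iff by simp_all
  have turn: "dotp (vsub (y + d, int n + 1) (r ! n)) (vsub (r ! (n - 1)) (r ! n)) = 0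
      \<longleftrightarrow> last_step n r \<noteq> d"
    using paths_penultimate[OF assms(1)] r(3) assms(2) by (auto simp: dotp_def vsub_def)
  have "(\<Prod>k<n. of_int (u ((r @ [(y + d, int n + 1)]) ! k, (r @ [(y + d, int n + 1)]) ! (k+1)))
      :: complex) = (\<Prod>k<n. of_int (u (r ! k, r ! (k+1))))"
    by (rule prod.cong) (use r(2) in \<open>auto simp: nth_append\<close>)
  then show ?thesis
    using r turn by (simp add: weight_def turns_snoc nth_append power_add)
qed

definition amp_last_step :: "field \<Rightarrow> nat \<Rightarrow> int \<Rightarrow> int \<Rightarrow> complex" where
  "amp_last_step u n x d = sum (weight u n) {s \<in> paths x (int n). last_step n s = d}"

lemma amp_last_step_Suc:
  assumes "n \<ge> 1" "d \<in> {1, -1}"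
  shows "amp_last_step u (Suc n) x d
       = of_int (u ((x - d, int n), (x, int n + 1)))
         * (amp_last_step u n (x - d) d - \<i> * amp_last_step u n (x - d) (- d))"
proof -
  let ?P = "paths (x - d) (int n)"
  let ?e = "of_int (u ((x - d, int n), (x, int n + 1))) :: complex"
  have "amp_last_step u (Suc n) x d = (\<Sum>r\<in>?P. weight u (Suc n) (r @ [(x, int n + 1)]))"
    unfolding amp_last_step_def paths_Suc_by_last_step[OF assms] by (simp add: sum.reindex inj_on_def)
  also have "\<dots>
      = (\<Sum>r\<in>?P. ?e * (if last_step n r = d then weight u n r else - \<i> * weight u n r))"
    using weight_snoc[of _ "x - d" n d u] assms(2) by (intro sum.cong) auto
  also have "\<dots>
      = ?e * (\<Sum>r\<in>?P. if last_step n r = d then weight u n r else - \<i> * weight u n r)"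
    by (simp add: sum_distrib_left)
  also have "(\<Sum>r\<in>?P. if last_step n r = d then weight u n r else - \<i> * weight u n r)
      = (\<Sum>r\<in>{r \<in> ?P. last_step n r = d}. weight u n r)
        - \<i> * (\<Sum>r\<in>{r \<in> ?P. last_step n r \<noteq> d}. weight u n r)"
    unfolding sum.If_cases[OF finite_paths] sum_distrib_left by (simp add: Int_def sum_negf)
  also have "{r \<in> ?P. last_step n r \<noteq> d} = {r \<in> ?P. last_step n r = - d}"
    using paths_penultimate[of _ "x - d" n] assms(2) by fastforce
  finally show ?thesis unfolding amp_last_step_def .
qed

lemma sum_weight_eq_amp_last_step:
  assumes "n \<ge> 1"
  shows "sum (weight u n) (paths x (int n)) = amp_last_step u n x 1 + amp_last_step u n x (-1)"
proof -
  have "paths x (int n)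
      = {s \<in> paths x (int n). last_step n s = 1} \<union> {s \<in> paths x (int n). last_step n s = -1}"
    using paths_penultimate[of _ x n] by auto
  moreover have "finite {s \<in> paths x (int n). last_step n s = d}" for d
    using finite_paths by simp
  ultimately show ?thesis
    unfolding amp_last_step_def by (subst sum.union_disjoint[symmetric]) auto
qed

lemma paths_1: "paths x 1 = (if x = 1 then {[(0,0), (1,1)]} else {})"
proof (intro set_eqI iffI)
  fix s
  assume "s \<in> paths x 1"
  then have "length s = 2" "s ! 0 = (0,0)" "s ! 1 = (1,1)" "s ! 1 = (x, 1)"
    unfolding paths_def by auto
  then have "s = [(0,0), (1,1)]" "x = 1"
    by (auto intro!: nth_equalityI simp: less_Suc_eq numeral_2_eq_2)
  then show "s \<in> (if x = 1 then {[(0,0), (1,1)]} else {})"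
    by simp
next
  fix s
  assume "s \<in> (if x = 1 then {[(0,0), (1,1)] :: point list} else {})"
  then show "s \<in> paths x 1"
    by (auto split: if_splits simp: paths_def checker_path_def vsub_def)
qed

lemma amp_last_step_1:
  "amp_last_step u 1 x d = (if x = 1 \<and> d = 1 then of_int (u ((0,0), (1,1))) else 0)"
proof -
  have "{s \<in> paths x (int 1). last_step 1 s = d}
      = (if x = 1 \<and> d = 1 then {[(0,0), (1,1)]} else {})"
    using paths_1[of x] by (auto simp: last_step_def)
  moreover have "turns [(0,0), (1,1)] = 0"
    unfolding turns_def card_eq_0_iff by auto
  then have "weight u 1 [(0,0), (1,1)] = of_int (u ((0,0), (1,1)))"
    by (simp add: weight_def)
  ultimately show ?thesis
    by (simp add: amp_last_step_def)
qed

(* The value 0 at time 0 agrees with a(x,0,u) = 0, so that a1_a2_eq_unscaled holds for all n. *)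
fun a1_unscaled :: "field \<Rightarrow> nat \<Rightarrow> int \<Rightarrow> int"
  and a2_unscaled :: "field \<Rightarrow> nat \<Rightarrow> int \<Rightarrow> int" where
  "a1_unscaled u 0 x = 0"
| "a1_unscaled u (Suc 0) x = 0"
| "a1_unscaled u (Suc (Suc n)) x = u ((x + 1, int (Suc n)), (x, int (Suc n) + 1))
      * (a1_unscaled u (Suc n) (x + 1) + a2_unscaled u (Suc n) (x + 1))"
| "a2_unscaled u 0 x = 0"
| "a2_unscaled u (Suc 0) x = (if x = 1 then u ((0,0), (1,1)) else 0)"
| "a2_unscaled u (Suc (Suc n)) x = u ((x - 1, int (Suc n)), (x, int (Suc n) + 1))
      * (a2_unscaled u (Suc n) (x - 1) - a1_unscaled u (Suc n) (x - 1))"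

lemma a1_unscaled_Suc:
  "n \<ge> 1 \<Longrightarrow> a1_unscaled u (Suc n) x
     = u ((x + 1, int n), (x, int n + 1)) * (a1_unscaled u n (x + 1) + a2_unscaled u n (x + 1))"
  by (cases n) auto

lemma a2_unscaled_Suc:
  "n \<ge> 1 \<Longrightarrow> a2_unscaled u (Suc n) x
     = u ((x - 1, int n), (x, int n + 1)) * (a2_unscaled u n (x - 1) - a1_unscaled u n (x - 1))"
  by (cases n) auto

lemma amp_last_step_eq_unscaled:
  assumes "n \<ge> 1"
  shows "amp_last_step u n x 1 = of_int (a2_unscaled u n x)
    \<and> amp_last_step u n x (-1) = - \<i> * of_int (a1_unscaled u n x)"
  using assms
proof (induction n arbitrary: x rule: nat_induct_at_least)
  case base
  then show ?case
    using amp_last_step_1[of u x] by simp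
next
  case (Suc n)
  show ?case
    unfolding a1_unscaled_Suc[OF Suc.hyps] a2_unscaled_Suc[OF Suc.hyps]
    using amp_last_step_Suc[OF Suc.hyps, of 1 u x] amp_last_step_Suc[OF Suc.hyps, of "-1" u x] Suc.IH
    by (simp add: algebra_simps)
qed

lemma a1_a2_eq_unscaled:
  "a1 x (int n) u = 2 powr ((1 - real n) / 2) * a1_unscaled u n x"
  "a2 x (int n) u = 2 powr ((1 - real n) / 2) * a2_unscaled u n x"
proof -
  have "amp x (int n) u = complex_of_real (2 powr ((1 - real n) / 2))
          * (of_int (a1_unscaled u n x) + \<i> * of_int (a2_unscaled u n x))"
  proof (cases "n = 0")
    case True
    then show ?thesis
      by (simp add: amp_def paths_def)
  next
    case False
    then have "amp x (int n) u = complex_of_real (2 powr ((1 - real n) / 2)) * \<i>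
        * (amp_last_step u n x 1 + amp_last_step u n x (-1))"
      by (simp add: amp_def sum_weight_eq_amp_last_step[symmetric] weight_def)
    then show ?thesis
      using amp_last_step_eq_unscaled[of n u x] False by (simp add: algebra_simps)
  qed
  then show "a1 x (int n) u = 2 powr ((1 - real n) / 2) * a1_unscaled u n x"
    "a2 x (int n) u = 2 powr ((1 - real n) / 2) * a2_unscaled u n x"
    by (simp_all add: a1_def a2_def)
qed

lemma u_thm_upward_edge:
  "u_thm ((a, b), (c, b + 1)) = (if even (min a c) \<and> even b then -1 else 1)"
  by (auto simp: u_thm_def Let_def)

lemma a1_unscaled_u_thm_Suc:
  "n \<ge> 1 \<Longrightarrow> a1_unscaled u_thm (Suc n) x
     = (if even x \<and> even n then -1 else 1)
       * (a1_unscaled u_thm n (x + 1) + a2_unscaled u_thm n (x + 1))"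
  by (simp add: a1_unscaled_Suc u_thm_upward_edge)

lemma a2_unscaled_u_thm_Suc:
  "n \<ge> 1 \<Longrightarrow> a2_unscaled u_thm (Suc n) x
     = (if odd x \<and> even n then -1 else 1)
       * (a2_unscaled u_thm n (x - 1) - a1_unscaled u_thm n (x - 1))"
  by (simp add: a2_unscaled_Suc u_thm_upward_edge)

lemma a_unscaled_u_thm_1:
  "a1_unscaled u_thm 1 y = 0" "a2_unscaled u_thm 1 y = (if y = 1 then -1 else 0)"
  by (simp_all add: u_thm_def)

lemma a_unscaled_u_thm_2:
  "a1_unscaled u_thm 2 y = (if y = 0 then -1 else 0)"
  "a2_unscaled u_thm 2 y = (if y = 2 then -1 else 0)"
  unfolding numeral_2_eq_2
  using a1_unscaled_u_thm_Suc[of "Suc 0" y] a2_unscaled_u_thm_Suc[of "Suc 0" y]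
  by (simp_all add: a_unscaled_u_thm_1[unfolded One_nat_def] del: a1_unscaled.simps a2_unscaled.simps)

lemma even_if_4_dvd_diff:
  fixes x c :: int
  assumes "4 dvd x - 2 * c"
  shows "even x"
proof -
  have "2 dvd x - 2 * c"
    using assms by (rule dvd_trans[rotated]) simp
  then show ?thesis
    by simp
qed

lemma a_unscaled_u_thm_even_time:
  assumes "k \<ge> 1" "4 dvd x - 2 * int k - 2"
  shows "a2_unscaled u_thm (2 * k) x = 0
    \<and> a1_unscaled u_thm (2 * k) x
        = a1_unscaled u_thm (2 * k) (x + 2) + a2_unscaled u_thm (2 * k) (x + 2)"
  using assms
proof (induction k arbitrary: x rule: nat_induct_at_least)
  case base
  then have "even x" "x \<noteq> 2" "x \<noteq> -2"
    using even_if_4_dvd_diff[of x 2] by auto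
  then show ?case
    by (simp only: mult_1_right a_unscaled_u_thm_2) simp
next
  case (Suc k)
  have "x - 2 - 2 * int k - 2 = x - 2 * int (Suc k) - 2"
    "x + 2 - 2 * int k - 2 = (x - 2 * int (Suc k) - 2) + 4"
    by simp_all
  then have "4 dvd x - 2 - 2 * int k - 2" "4 dvd x + 2 - 2 * int k - 2"
    using Suc.prems by (simp_all only: dvd_add dvd_refl)
  then have IH: "a2_unscaled u_thm (2 * k) (x - 2) = 0" "a2_unscaled u_thm (2 * k) (x + 2) = 0"
    "a1_unscaled u_thm (2 * k) (x - 2) = a1_unscaled u_thm (2 * k) x + a2_unscaled u_thm (2 * k) x"
    "a1_unscaled u_thm (2 * k) (x + 2)
      = a1_unscaled u_thm (2 * k) (x + 4) + a2_unscaled u_thm (2 * k) (x + 4)"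
    using Suc.IH[of "x - 2"] Suc.IH[of "x + 2"] by (simp_all add: add.assoc)
  have "even x"
    using Suc.prems even_if_4_dvd_diff[of x "int (Suc k) + 1"] by (simp add: algebra_simps)
  then show ?case
    using Suc.hyps IH
    by (simp add: a1_unscaled_u_thm_Suc a2_unscaled_u_thm_Suc ac_simps
        del: a1_unscaled.simps(3) a2_unscaled.simps(3))
qed

lemma a_unscaled_u_thm_odd_time:
  assumes "4 dvd x - 2 * int k - 2"
  shows "a1_unscaled u_thm (Suc (2 * k)) (x + 1) = a1_unscaled u_thm (2 * k) x
    \<and> a1_unscaled u_thm (Suc (2 * k)) (x - 1) = a1_unscaled u_thm (2 * k) x
    \<and> a2_unscaled u_thm (Suc (2 * k)) (x + 1) = a1_unscaled u_thm (2 * k) x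
    \<and> a1_unscaled u_thm (Suc (Suc (2 * k))) x = 2 * a1_unscaled u_thm (2 * k) x
    \<and> a2_unscaled u_thm (Suc (Suc (2 * k))) x
        = a2_unscaled u_thm (Suc (2 * k)) (x - 1) - a1_unscaled u_thm (2 * k) x
    \<and> a2_unscaled u_thm (2 * k) x = 0"
proof (cases "k = 0")
  case True
  with assms have "x \<noteq> 0"
    by auto
  with True show ?thesis
    by (simp add: a_unscaled_u_thm_1[unfolded One_nat_def]
        a_unscaled_u_thm_2[unfolded numeral_2_eq_2] del: a1_unscaled.simps(2,3) a2_unscaled.simps(2,3))
next
  case False
  then have "k \<ge> 1"
    by simp
  moreover have "even x"
    using assms even_if_4_dvd_diff[of x "int k + 1"] by (simp add: algebra_simps)
  ultimately show ?thesis
    using a_unscaled_u_thm_even_time[OF \<open>k \<ge> 1\<close> assms]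
    by (simp add: a1_unscaled_u_thm_Suc a2_unscaled_u_thm_Suc ac_simps
        del: a1_unscaled.simps(3) a2_unscaled.simps(3))
qed

lemma odd_time_indexE:
  fixes x t :: int
  assumes "t \<ge> 1" "(x mod 4 = 2 \<and> t mod 4 = 1) \<or> (x mod 4 = 0 \<and> t mod 4 = 3)"
  obtains k where "t = int (Suc (2 * k))" "4 dvd x - 2 * int k - 2"
proof -
  define i j where "i = x div 4" and "j = t div 4"
  have x: "x = 4 * i + x mod 4" and t: "t = 4 * j + t mod 4"
    unfolding i_def j_def by simp_all
  have "j \<ge> 0"
    using assms(1) t pos_mod_bound[of 4 t] by linarith
  from assms(2) show ?thesis
  proof
    assume "x mod 4 = 2 \<and> t mod 4 = 1"
    with x t \<open>j \<ge> 0\<close> show ?thesis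
      by (intro that[of "nat (2 * j)"]) (simp_all add: dvd_def, presburger)
  next
    assume "x mod 4 = 0 \<and> t mod 4 = 3"
    with x t \<open>j \<ge> 0\<close> show ?thesis
      by (intro that[of "nat (2 * j + 1)"]) (simp_all add: dvd_def, presburger)
  qed
qed

lemma two_powr_half_Suc: "2 powr ((1 - real (Suc n)) / 2) = 2 powr ((1 - real n) / 2) / sqrt 2"
proof -
  have "(1 - real (Suc n)) / 2 = (1 - real n) / 2 - 1 / 2"
    by (simp add: field_simps)
  then show ?thesis
    by (simp only: powr_diff powr_half_sqrt)
qed

theorem theorem4:
  fixes x t :: int
  assumes "t \<ge> 1"
    and "(x mod 4 = 2 \<and> t mod 4 = 1) \<or> (x mod 4 = 0 \<and> t mod 4 = 3)"
  shows "sqrt 2 * a1 (x+1) t u_thm = a1 x (t-1) u_thm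
       \<and> a1 x (t-1) u_thm = sqrt 2 * a1 (x-1) t u_thm
       \<and> sqrt 2 * a1 (x-1) t u_thm = a1 x (t+1) u_thm
       \<and> a1 x (t+1) u_thm = sqrt 2 * a2 (x+1) t u_thm
       \<and> sqrt 2 * a2 (x+1) t u_thm = sqrt 2 * a2 (x-1) t u_thm - 2 * a2 x (t+1) u_thm
       \<and> a2 x (t-1) u_thm = 0"
proof -
  obtain k where t: "t = int (Suc (2 * k))" and x: "4 dvd x - 2 * int k - 2"
    using odd_time_indexE[OF assms] .
  define c where "c = 2 powr ((1 - real (Suc (2 * k))) / 2)"
  have t_pred: "t - 1 = int (2 * k)" and t_succ: "t + 1 = int (Suc (Suc (2 * k)))"
    using t by simp_all
  have c_pred: "2 powr ((1 - real (2 * k)) / 2) = sqrt 2 * c"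
    and c_succ: "2 powr ((1 - real (Suc (Suc (2 * k)))) / 2) = c / sqrt 2"
    unfolding c_def two_powr_half_Suc[of "2 * k"] two_powr_half_Suc[of "Suc (2 * k)"]
    by simp_all
  have sqrt_2_twice: "sqrt 2 * (sqrt 2 * y) = 2 * y" for y :: real
    by (simp add: mult.assoc[symmetric])
  show ?thesis
    unfolding t_pred t_succ unfolding t a1_a2_eq_unscaled c_pred c_succ c_def[symmetric]
    by (simp only: a_unscaled_u_thm_odd_time[OF x]) (simp add: field_simps sqrt_2_twice)
qed

end
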